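(* Let $G$ be an abelian group with no elements of order $2$, $F$ a field of characteristic $0$, and let $R=M_n(F)$ carry the elementary $G$-grading induced by an $n$-tuple $(g_1,\dots,g_n)$ of pairwise distinct elements of $G$. Suppose that there exists $g\in G$ with $\dim R_g=1$ and that $R$ satisfies no non-trivial multilinear graded monomial identity of length $2$. Then the grading on $R$ is isomorphic to a coarsening of the $\mathbb{Z}^{\lfloor n/2\rfloor}$-grading $\Gamma_n$ defined below; that is, there is an algebra automorphism $\varphi$ of $M_n(F)$ such that for every $u\in\mathbb{Z}^{\lfloor n/2\rfloor}$ there is $g\in G$ with $\varphi(\Gamma_{n,u})\subseteq R_g$. Equivalently, after reordering the tuple and translating it, the grading is induced by $(h_1,\dots,h_n)$ satisfying $h_{t+1}-h_t=h_{n-t+1}-h_{n-t}$ for $t=1,\dots,n-1$.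
   Context: The elementary grading on $M_n(F)$ induced by $(g_1,\dots,g_n)$ in an additive group is $R_g=\mathrm{span}\{e_{pq}: g_q-g_p=g\}$. The grading $\Gamma_n$: let $m=\lfloor n/2\rfloor$ and $e_1,\dots,e_m$ the standard basis of $\mathbb{Z}^m$; put $d_i=e_i$ for $1\leq i\leq m$ and $d_i=d_{n-i}$ for $m<i\leq n-1$; let $\overline{g}=(g_1,\dots,g_n)$ with $g_1=0$ and $g_{i+1}=g_i+d_i$; $\Gamma_n$ is the elementary $\mathbb{Z}^m$-grading on $M_n(F)$ induced by $\overline g$, with components $\Gamma_{n,u}=\mathrm{span}\{e_{pq}: g_q-g_p=u\}$. A grading $\Gamma'$ is a coarsening of $\Gamma$ if every homogeneous component of $\Gamma$ is contained in some homogeneous component of $\Gamma'$. A graded monomial identity is trivial if it lies in the $T_G$-ideal generated by the variables whose degree is outside the support of the grading, and non-trivial otherwise; its length is its number of variables. *)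

theory Defs
  imports "Jordan_Normal_Form.Matrix" "HOL-Library.Function_Algebras"
begin

text \<open>Matrices in M_n(F) are Jordan_Normal_Form matrices in carrier_mat n n,
  indices 0..n-1 (paper's index p corresponds to p+1 here).\<close>

text \<open>Homogeneous component of the elementary grading induced by the tuple g:
  the span of the matrix units e_pq with g q - g p = h, i.e. the matrices
  supported on those positions.\<close>
definition elem_comp :: "nat \<Rightarrow> (nat \<Rightarrow> 'g::ab_group_add) \<Rightarrow> 'g \<Rightarrow> 'f::field mat set" where
  "elem_comp n g h = {A \<in> carrier_mat n n. \<forall>p<n. \<forall>q<n. A $$ (p,q) \<noteq> 0 \<longrightarrow> g q - g p = h}"

definition dim_one :: "nat \<Rightarrow> 'f::field mat set \<Rightarrow> bool" where
  "dim_one n V \<longleftrightarrow> (\<exists>A\<in>V. A \<noteq> 0\<^sub>m n n \<and> V = {c \<cdot>\<^sub>m A | c. True})"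

definition in_support :: "nat \<Rightarrow> (nat \<Rightarrow> 'g::ab_group_add) \<Rightarrow> 'f::field itself \<Rightarrow> 'g \<Rightarrow> bool" where
  "in_support n g TYPE('f) h \<longleftrightarrow> (elem_comp n g h :: 'f::field mat set) \<noteq> {0\<^sub>m n n}"

definition monomial_identity2 :: "nat \<Rightarrow> (nat \<Rightarrow> 'g::ab_group_add) \<Rightarrow> 'f::field itself \<Rightarrow> 'g \<Rightarrow> 'g \<Rightarrow> bool" where
  "monomial_identity2 n g TYPE('f) a b \<longleftrightarrow>
     (\<forall>A \<in> (elem_comp n g a :: 'f mat set). \<forall>B \<in> elem_comp n g b. A * B = 0\<^sub>m n n)"

text \<open>x^(a) y^(b) is trivial iff it lies in the T_G-ideal generated by the variables
  of degree outside the support; this ideal is spanned by the monomials having a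
  consecutive subword whose degree is outside the support, so for length 2 this
  means one of a, b, a+b is outside the support.\<close>
definition nontrivial_monomial2 :: "nat \<Rightarrow> (nat \<Rightarrow> 'g::ab_group_add) \<Rightarrow> 'f::field itself \<Rightarrow> 'g \<Rightarrow> 'g \<Rightarrow> bool" where
  "nontrivial_monomial2 n g TYPE('f) a b \<longleftrightarrow>
     in_support n g TYPE('f) a \<and> in_support n g TYPE('f) b \<and> in_support n g TYPE('f) (a + b)"

definition mat_alg_aut :: "nat \<Rightarrow> ('f::field mat \<Rightarrow> 'f mat) \<Rightarrow> bool" where
  "mat_alg_aut n \<phi> \<longleftrightarrow> bij_betw \<phi> (carrier_mat n n) (carrier_mat n n) \<and>
     (\<forall>A\<in>carrier_mat n n. \<forall>B\<in>carrier_mat n n.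
        \<phi> (A + B) = \<phi> A + \<phi> B \<and> \<phi> (A * B) = \<phi> A * \<phi> B) \<and>
     (\<forall>c. \<forall>A\<in>carrier_mat n n. \<phi> (c \<cdot>\<^sub>m A) = c \<cdot>\<^sub>m \<phi> A)"

text \<open>The grading Gamma_n. Z^m is represented by nat \<Rightarrow> int (coordinates 1..m used;
  all others are 0). Paper's e_i, d_i (1-based), and g_{p+1} at 0-based position p.\<close>
definition unit_vec_Z :: "nat \<Rightarrow> (nat \<Rightarrow> int)" where
  "unit_vec_Z i = (\<lambda>j. if j = i then 1 else 0)"

definition gamma_d :: "nat \<Rightarrow> nat \<Rightarrow> (nat \<Rightarrow> int)" where
  "gamma_d n i = (if i \<le> n div 2 then unit_vec_Z i else unit_vec_Z (n - i))"

definition gamma_g :: "nat \<Rightarrow> nat \<Rightarrow> (nat \<Rightarrow> int)" where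
  "gamma_g n p = (\<Sum>i\<in>{1..p}. gamma_d n i)"

definition Gamma :: "nat \<Rightarrow> (nat \<Rightarrow> int) \<Rightarrow> 'f::field mat set" where
  "Gamma n u = elem_comp n (gamma_g n) u"

end

theory Submission
  imports Defs
begin

(*
  The one-dimensional component R_h is spanned by a single matrix unit e_{p0 q0}. For every index x
  the degrees a = g_{q0} - g_x, b = g_x - g_{p0} and a + b = h lie in the support, so x^(a) y^(b) is
  not an identity: some e_{ij} of degree a times some e_{jk} of degree b is nonzero. Then
  g_k - g_i = h forces i = p0, whence g_j = c - g_x with c = g_{p0} + g_{q0}. So the tuple is closed
  under the reflection y -> c - y, which fixes at most one entry because G has no elements of
  order 2; listing the pairs {y, c - y} from both ends reorders the tuple so that h_{n+1-t} = c - h_t.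
  The consecutive differences of such a tuple are palindromic, so h_q - h_p is the image of the
  Gamma_n-degree of e_{pq} under the homomorphism Z^m -> G sending e_i to h_{i+1} - h_i, and the
  automorphism permuting rows and columns accordingly maps each Gamma_n-component into a single
  R_g.
*)

definition mat_unit :: "nat \<Rightarrow> nat \<Rightarrow> nat \<Rightarrow> 'f::field mat" where
  "mat_unit n p q = mat n n (\<lambda>(i,j). if i = p \<and> j = q then 1 else 0)"

lemma mat_unit_elem_comp:
  assumes "p < n" "q < n"
  shows "(mat_unit n p q :: 'f::field mat) \<in> elem_comp n g (g q - g p)"
  using assms unfolding elem_comp_def mat_unit_def by auto

lemma mat_unit_nonzero:
  assumes "p < n" "q < n"
  shows "(mat_unit n p q :: 'f::field mat) \<noteq> 0\<^sub>m n n"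
proof
  assume "(mat_unit n p q :: 'f mat) = 0\<^sub>m n n"
  then have "(mat_unit n p q :: 'f mat) $$ (p,q) = 0" using assms by simp
  then show False using assms unfolding mat_unit_def by simp
qed

lemma in_supportI:
  assumes "p < n" "q < n"
  shows "in_support n g TYPE('f::field) (g q - g p)"
  using mat_unit_elem_comp[OF assms, of g, where 'f='f] mat_unit_nonzero[OF assms, where 'f='f]
  unfolding in_support_def by auto

lemma mat_nonzero_entry:
  assumes "A \<in> carrier_mat n n" "A \<noteq> 0\<^sub>m n n"
  obtains i j where "i < n" "j < n" "A $$ (i,j) \<noteq> 0"
proof -
  have "\<exists>i<n. \<exists>j<n. A $$ (i,j) \<noteq> 0"
  proof (rule ccontr)
    assume "\<not> ?thesis"
    then have "A = 0\<^sub>m n n" using assms(1) by (intro eq_matI) auto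
    then show False using assms(2) by simp
  qed
  then show thesis using that by blast
qed

lemma dim_one_elem_comp_unique_pair:
  assumes "dim_one n (elem_comp n g h :: 'f::field mat set)"
  obtains p0 q0 where "p0 < n" "q0 < n" "g q0 - g p0 = h"
    "\<And>p q. p < n \<Longrightarrow> q < n \<Longrightarrow> g q - g p = h \<Longrightarrow> p = p0 \<and> q = q0"
proof -
  obtain A :: "'f mat" where A: "A \<in> elem_comp n g h" "A \<noteq> 0\<^sub>m n n"
    and span: "elem_comp n g h = {c \<cdot>\<^sub>m A | c. True}"
    using assms unfolding dim_one_def by blast
  have A_carrier: "A \<in> carrier_mat n n" using A(1) unfolding elem_comp_def by simp
  obtain p0 q0 where pq0: "p0 < n" "q0 < n" "A $$ (p0,q0) \<noteq> 0"
    using mat_nonzero_entry[OF A_carrier A(2)] .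
  have "g q0 - g p0 = h" using A(1) pq0 unfolding elem_comp_def by blast
  moreover have "p = p0 \<and> q = q0" if pq: "p < n" "q < n" "g q - g p = h" for p q
  proof -
    have "(mat_unit n p q :: 'f mat) \<in> elem_comp n g h"
      using mat_unit_elem_comp[OF pq(1,2), of g] pq(3) by simp
    then obtain c where c: "mat_unit n p q = c \<cdot>\<^sub>m A" using span by auto
    have "(mat_unit n p q :: 'f mat) $$ (p,q) = c * A $$ (p,q)"
      and "(mat_unit n p q :: 'f mat) $$ (p0,q0) = c * A $$ (p0,q0)"
      using c pq pq0 A_carrier by simp_all
    then show ?thesis using pq pq0 unfolding mat_unit_def by (auto split: if_splits)
  qed
  ultimately show thesis using that pq0 by blast
qed

lemma not_monomial_identity2_path:
  assumes "\<not> monomial_identity2 n g TYPE('f::field) a b"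
  obtains i j k where "i < n" "j < n" "k < n" "g j - g i = a" "g k - g j = b"
proof -
  obtain A B :: "'f mat" where A: "A \<in> elem_comp n g a" and B: "B \<in> elem_comp n g b"
    and AB: "A * B \<noteq> 0\<^sub>m n n"
    using assms unfolding monomial_identity2_def by blast
  have A_carrier: "A \<in> carrier_mat n n" and B_carrier: "B \<in> carrier_mat n n"
    using A B unfolding elem_comp_def by auto
  then have "A * B \<in> carrier_mat n n" by simp
  then obtain i k where ik: "i < n" "k < n" "(A * B) $$ (i,k) \<noteq> 0"
    using mat_nonzero_entry AB by blast
  then have "(\<Sum>j\<in>{0..<n}. A $$ (i,j) * B $$ (j,k)) \<noteq> 0"
    using A_carrier B_carrier by (simp add: scalar_prod_def)
  then obtain j where "j \<in> {0..<n}" "A $$ (i,j) * B $$ (j,k) \<noteq> 0"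
    by (meson sum.neutral)
  then show thesis
    using that ik A B unfolding elem_comp_def by auto
qed

lemma tuple_closed_under_reflection:
  fixes g :: "nat \<Rightarrow> 'g::ab_group_add"
  assumes no_id: "\<forall>a b. nontrivial_monomial2 n g TYPE('f::field) a b \<longrightarrow>
                       \<not> monomial_identity2 n g TYPE('f) a b"
    and pq0: "p0 < n" "q0 < n"
    and unique: "\<And>p q. p < n \<Longrightarrow> q < n \<Longrightarrow> g q - g p = g q0 - g p0 \<Longrightarrow> p = p0"
    and x: "x < n"
  shows "g p0 + g q0 - g x \<in> g ` {..<n}"
proof -
  define a b where "a = g q0 - g x" and "b = g x - g p0"
  have "a + b = g q0 - g p0" unfolding a_def b_def by simp
  then have "nontrivial_monomial2 n g TYPE('f) a b"
    unfolding nontrivial_monomial2_def a_def b_def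
    using in_supportI[OF x pq0(2), of g, where 'f='f] in_supportI[OF pq0(1) x, of g, where 'f='f]
      in_supportI[OF pq0(1) pq0(2), of g, where 'f='f]
    by simp
  then obtain i j k where ijk: "i < n" "j < n" "k < n" "g j - g i = a" "g k - g j = b"
    using no_id not_monomial_identity2_path by blast
  have "g k - g i = (g j - g i) + (g k - g j)" by simp
  also have "\<dots> = g q0 - g p0" using ijk(4,5) \<open>a + b = g q0 - g p0\<close> by simp
  finally have "g k - g i = g q0 - g p0" .
  then have "i = p0" using unique ijk(1,3) by blast
  then have "g j = g p0 + g q0 - g x" using ijk(4) unfolding a_def by (simp add: algebra_simps)
  then show ?thesis using ijk(2) by (intro image_eqI[of _ g j]) auto
qed

lemma involution_palindromic_list:
  assumes "finite S" "\<tau> ` S \<subseteq> S" "\<And>x. x \<in> S \<Longrightarrow> \<tau> (\<tau> x) = x"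
    and "\<And>x y. x \<in> S \<Longrightarrow> y \<in> S \<Longrightarrow> \<tau> x = x \<Longrightarrow> \<tau> y = y \<Longrightarrow> x = y"
  shows "\<exists>xs. distinct xs \<and> set xs = S \<and> rev xs = map \<tau> xs"
  using assms
proof (induction "card S" arbitrary: S rule: less_induct)
  case less
  show ?case
  proof (cases "\<exists>x\<in>S. \<tau> x \<noteq> x")
    case True
    then obtain x where x: "x \<in> S" "\<tau> x \<noteq> x" by blast
    have \<tau>x: "\<tau> x \<in> S" "\<tau> (\<tau> x) = x" using x(1) less.prems(2,3) by auto
    define S' where "S' = S - {x, \<tau> x}"
    have smaller: "card S' < card S"
      unfolding S'_def using x less.prems(1) by (intro psubset_card_mono) auto
    have closed: "\<tau> y \<in> S'" if "y \<in> S'" for y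
    proof -
      have y: "y \<in> S" "y \<noteq> x" "y \<noteq> \<tau> x" using that unfolding S'_def by auto
      have "\<tau> y \<noteq> x" using less.prems(3)[OF y(1)] y(3) by auto
      moreover have "\<tau> y \<noteq> \<tau> x" using less.prems(3)[OF y(1)] \<tau>x(2) y(2) by metis
      ultimately show ?thesis using less.prems(2) y(1) unfolding S'_def by auto
    qed
    have "\<exists>ys. distinct ys \<and> set ys = S' \<and> rev ys = map \<tau> ys"
      by (rule less.hyps) (use smaller closed less.prems in \<open>auto simp: S'_def\<close>)
    then obtain ys where ys: "distinct ys" "set ys = S'" "rev ys = map \<tau> ys" by blast
    show ?thesis
    proof (intro exI conjI)
      show "distinct (x # ys @ [\<tau> x])" "set (x # ys @ [\<tau> x]) = S"
        using ys x \<tau>x unfolding S'_def by auto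
      show "rev (x # ys @ [\<tau> x]) = map \<tau> (x # ys @ [\<tau> x])"
        using ys(3) \<tau>x(2) by simp
    qed
  next
    case False
    show ?thesis
    proof (cases "S = {}")
      case True
      then show ?thesis by simp
    next
      case False
      then obtain s where "S = {s}" "\<tau> s = s" using \<open>\<not> (\<exists>x\<in>S. \<tau> x \<noteq> x)\<close> less.prems(4) by blast
      then show ?thesis by (intro exI[of _ "[s]"]) simp
    qed
  qed
qed

lemma symmetric_reordering:
  fixes g :: "nat \<Rightarrow> 'g::ab_group_add"
  assumes no_order2: "\<forall>x::'g. x + x = 0 \<longrightarrow> x = 0"
    and inj: "inj_on g {..<n}"
    and closed: "\<And>x. x < n \<Longrightarrow> c - g x \<in> g ` {..<n}"
  obtains \<sigma> where "bij_betw \<sigma> {..<n} {..<n}" "\<And>t. t < n \<Longrightarrow> g (\<sigma> (n - 1 - t)) = c - g (\<sigma> t)"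
proof -
  have fixed_unique: "x = y" if "c - x = x" "c - y = y" for x y :: 'g
  proof -
    have "x + x = c" "y + y = c" using that by (metis diff_add_cancel)+
    then have "(x - y) + (x - y) = 0" by (simp add: algebra_simps)
    then have "x - y = 0" using no_order2 by blast
    then show "x = y" by simp
  qed
  have "\<exists>xs. distinct xs \<and> set xs = g ` {..<n} \<and> rev xs = map (\<lambda>x. c - x) xs"
    by (rule involution_palindromic_list) (use closed fixed_unique in auto)
  then obtain xs where xs: "distinct xs" "set xs = g ` {..<n}" "rev xs = map (\<lambda>x. c - x) xs"
    by blast
  have len: "length xs = n"
    using distinct_card[OF xs(1)] xs(2) card_image[OF inj] by simp
  define \<sigma> where "\<sigma> = the_inv_into {..<n} g \<circ> (!) xs"
  have bij_nth: "bij_betw ((!) xs) {..<n} (g ` {..<n})"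
    using bij_betw_nth[OF xs(1)] len xs(2) by simp
  have g\<sigma>: "g (\<sigma> t) = xs ! t" if "t < n" for t
    unfolding \<sigma>_def using bij_betwE[OF bij_nth] that f_the_inv_into_f[OF inj] by simp
  show thesis
  proof
    show "bij_betw \<sigma> {..<n} {..<n}"
      unfolding \<sigma>_def using bij_nth bij_betw_the_inv_into[OF inj_on_imp_bij_betw[OF inj]]
      by (rule bij_betw_trans)
    fix t assume t: "t < n"
    have "xs ! (n - 1 - t) = rev xs ! t" using t len by (simp add: rev_nth)
    also have "\<dots> = c - xs ! t" using t len xs(3) by simp
    finally show "g (\<sigma> (n - 1 - t)) = c - g (\<sigma> t)" using t g\<sigma> by simp
  qed
qed

fun nsmul :: "nat \<Rightarrow> 'a::monoid_add \<Rightarrow> 'a" where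
  "nsmul 0 x = 0"
| "nsmul (Suc k) x = x + nsmul k x"

lemma nsmul_add: "nsmul (k + l) x = nsmul k x + nsmul l x"
  by (induction k) (simp_all add: add.assoc)

text \<open>On vectors with nonnegative entries, the homomorphism \<open>\<int>\<^sup>m \<rightarrow> G\<close> sending
  the unit vector \<open>e\<^sub>i\<close> to \<open>D i\<close>.\<close>
definition basis_eval :: "nat \<Rightarrow> (nat \<Rightarrow> 'g::ab_group_add) \<Rightarrow> (nat \<Rightarrow> int) \<Rightarrow> 'g" where
  "basis_eval m D u = (\<Sum>i\<in>{1..m}. nsmul (nat (u i)) (D i))"

lemma basis_eval_add:
  assumes "0 \<le> u" "0 \<le> v"
  shows "basis_eval m D (u + v) = basis_eval m D u + basis_eval m D v"
proof -
  have "nsmul (nat ((u + v) i)) x = nsmul (nat (u i)) x + nsmul (nat (v i)) x" for i and x :: 'a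
    using assms by (simp add: le_fun_def nat_add_distrib nsmul_add)
  then show ?thesis unfolding basis_eval_def by (simp add: sum.distrib)
qed

lemma basis_eval_unit_vec_Z:
  assumes "1 \<le> k" "k \<le> m"
  shows "basis_eval m D (unit_vec_Z k) = D k"
proof -
  have "basis_eval m D (unit_vec_Z k) = (\<Sum>i\<in>{1..m}. if i = k then D i else 0)"
    unfolding basis_eval_def unit_vec_Z_def by (intro sum.cong) auto
  also have "\<dots> = D k" using assms by simp
  finally show ?thesis .
qed

lemma gamma_d_nonneg: "0 \<le> gamma_d n i"
  by (simp add: gamma_d_def unit_vec_Z_def le_fun_def)

lemma gamma_g_nonneg: "0 \<le> gamma_g n p"
  unfolding gamma_g_def by (simp add: sum_nonneg gamma_d_nonneg)

lemma gamma_g_Suc: "gamma_g n (Suc p) = gamma_g n p + gamma_d n (Suc p)"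
  by (simp add: gamma_g_def add.commute)

locale symmetric_tuple =
  fixes n :: nat and G :: "nat \<Rightarrow> 'g::ab_group_add" and c :: 'g
  assumes sym: "\<And>t. t < n \<Longrightarrow> G (n - 1 - t) = c - G t"
begin

lemma palindromic_increment:
  assumes "1 \<le> j" "j < n"
  shows "G (n - j) - G (n - j - 1) = G j - G (j - 1)"
proof -
  have "G (n - j) = c - G (j - 1)" using sym[of "j - 1"] assms by simp
  moreover have "G (n - j - 1) = c - G j" using sym[of j] assms by (simp add: diff_commute)
  ultimately show ?thesis by (simp add: algebra_simps)
qed

abbreviation increment_eval :: "(nat \<Rightarrow> int) \<Rightarrow> 'g" where
  "increment_eval \<equiv> basis_eval (n div 2) (\<lambda>i. G i - G (i - 1))"

lemma increment_eval_gamma_d: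
  assumes "1 \<le> j" "j < n"
  shows "increment_eval (gamma_d n j) = G j - G (j - 1)"
proof (cases "j \<le> n div 2")
  case True
  then show ?thesis using assms by (simp add: gamma_d_def basis_eval_unit_vec_Z)
next
  case False
  then have "increment_eval (gamma_d n j) = G (n - j) - G (n - j - 1)"
    using assms by (simp add: gamma_d_def basis_eval_unit_vec_Z)
  then show ?thesis using palindromic_increment[OF assms] by simp
qed

lemma increment_eval_gamma_g: "p < n \<Longrightarrow> G p = G 0 + increment_eval (gamma_g n p)"
proof (induction p)
  case 0
  then show ?case by (simp add: gamma_g_def basis_eval_def)
next
  case (Suc p)
  have "increment_eval (gamma_g n (Suc p))
      = increment_eval (gamma_g n p) + increment_eval (gamma_d n (Suc p))"
    unfolding gamma_g_Suc by (rule basis_eval_add[OF gamma_g_nonneg gamma_d_nonneg])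
  also have "\<dots> = (G p - G 0) + (G (Suc p) - G p)"
    using Suc increment_eval_gamma_d[of "Suc p"] by simp
  finally show ?case by simp
qed

lemma diff_eq_if_gamma_g_diff_eq:
  assumes lt: "p < n" "q < n" "p' < n" "q' < n"
    and eq: "gamma_g n q - gamma_g n p = gamma_g n q' - gamma_g n p'"
  shows "G q - G p = G q' - G p'"
proof -
  have eq': "gamma_g n q + gamma_g n p' = gamma_g n q' + gamma_g n p"
    using eq by (metis add.commute diff_add_eq diff_eq_eq)
  have "G q + G p' = G 0 + G 0 + increment_eval (gamma_g n q + gamma_g n p')"
    by (simp add: increment_eval_gamma_g[OF lt(2)] increment_eval_gamma_g[OF lt(3)]
        basis_eval_add gamma_g_nonneg algebra_simps)
  also have "\<dots> = G 0 + G 0 + increment_eval (gamma_g n q' + gamma_g n p)"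
    by (simp only: eq')
  also have "\<dots> = G q' + G p"
    by (simp add: increment_eval_gamma_g[OF lt(4)] increment_eval_gamma_g[OF lt(1)]
        basis_eval_add gamma_g_nonneg algebra_simps)
  finally show ?thesis by (metis add.commute diff_add_eq diff_eq_eq)
qed

end

definition permute_mat :: "nat \<Rightarrow> (nat \<Rightarrow> nat) \<Rightarrow> 'a mat \<Rightarrow> 'a mat" where
  "permute_mat n \<pi> B = mat n n (\<lambda>(i,j). B $$ (\<pi> i, \<pi> j))"

lemma permute_mat_dim [simp]:
  "dim_row (permute_mat n \<pi> B) = n" "dim_col (permute_mat n \<pi> B) = n"
  "permute_mat n \<pi> B \<in> carrier_mat n n"
  by (simp_all add: permute_mat_def)

lemma permute_mat_index [simp]: "i < n \<Longrightarrow> j < n \<Longrightarrow> permute_mat n \<pi> B $$ (i,j) = B $$ (\<pi> i, \<pi> j)"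
  by (simp add: permute_mat_def)

lemma permute_mat_mult:
  assumes \<pi>: "bij_betw \<pi> {..<n} {..<n}"
    and A: "A \<in> carrier_mat n n" and B: "B \<in> carrier_mat n n"
  shows "permute_mat n \<pi> (A * B :: 'a::comm_semiring_0 mat) = permute_mat n \<pi> A * permute_mat n \<pi> B"
proof (rule eq_matI)
  fix i j assume "i < dim_row (permute_mat n \<pi> A * permute_mat n \<pi> B)"
    "j < dim_col (permute_mat n \<pi> A * permute_mat n \<pi> B)"
  then have ij: "i < n" "j < n" by auto
  have \<pi>_lt: "\<pi> i < n" "\<pi> j < n" using ij bij_betwE[OF \<pi>] by auto
  have "permute_mat n \<pi> (A * B) $$ (i,j) = (\<Sum>k<n. A $$ (\<pi> i, k) * B $$ (k, \<pi> j))"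
    using A B ij \<pi>_lt by (simp add: scalar_prod_def lessThan_atLeast0)
  also have "\<dots> = (\<Sum>k<n. A $$ (\<pi> i, \<pi> k) * B $$ (\<pi> k, \<pi> j))"
    using sum.reindex_bij_betw[OF \<pi>, of "\<lambda>k. A $$ (\<pi> i, k) * B $$ (k, \<pi> j)"] by simp
  also have "\<dots> = (permute_mat n \<pi> A * permute_mat n \<pi> B) $$ (i,j)"
    using ij by (simp add: scalar_prod_def lessThan_atLeast0)
  finally show "permute_mat n \<pi> (A * B) $$ (i,j) = (permute_mat n \<pi> A * permute_mat n \<pi> B) $$ (i,j)" .
qed auto

lemma permute_mat_inverse:
  assumes \<pi>: "bij_betw \<pi> {..<n} {..<n}" and B: "B \<in> carrier_mat n n"
  shows "permute_mat n (inv_into {..<n} \<pi>) (permute_mat n \<pi> B) = B"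
    and "permute_mat n \<pi> (permute_mat n (inv_into {..<n} \<pi>) B) = B"
  using B bij_betwE[OF \<pi>] bij_betwE[OF bij_betw_inv_into[OF \<pi>]]
    bij_betw_inv_into_left[OF \<pi>] bij_betw_inv_into_right[OF \<pi>]
  by (auto intro!: eq_matI)

lemma mat_alg_aut_permute_mat:
  assumes \<pi>: "bij_betw \<pi> {..<n} {..<n}"
  shows "mat_alg_aut n (permute_mat n \<pi> :: 'f::field mat \<Rightarrow> 'f mat)"
  unfolding mat_alg_aut_def
proof (intro conjI ballI allI)
  show "bij_betw (permute_mat n \<pi> :: 'f mat \<Rightarrow> 'f mat) (carrier_mat n n) (carrier_mat n n)"
    using permute_mat_inverse[OF \<pi>]
    by (intro bij_betw_byWitness[where f' = "permute_mat n (inv_into {..<n} \<pi>)"]) auto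
  fix A B :: "'f mat" assume A: "A \<in> carrier_mat n n" and B: "B \<in> carrier_mat n n"
  show "permute_mat n \<pi> (A + B) = permute_mat n \<pi> A + permute_mat n \<pi> B"
    using A B bij_betwE[OF \<pi>] by (intro eq_matI) auto
  show "permute_mat n \<pi> (A * B) = permute_mat n \<pi> A * permute_mat n \<pi> B"
    by (rule permute_mat_mult[OF \<pi> A B])
next
  fix c :: 'f and A :: "'f mat" assume "A \<in> carrier_mat n n"
  then show "permute_mat n \<pi> (c \<cdot>\<^sub>m A) = c \<cdot>\<^sub>m permute_mat n \<pi> A"
    using bij_betwE[OF \<pi>] by (intro eq_matI) auto
qed

lemma permute_mat_elem_comp_coarsening:
  assumes \<sigma>: "bij_betw \<sigma> {..<n} {..<n}"
    and compat: "\<And>p q p' q'. p < n \<Longrightarrow> q < n \<Longrightarrow> p' < n \<Longrightarrow> q' < n \<Longrightarrow>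
      a q - a p = a q' - a p' \<Longrightarrow> b (\<sigma> q) - b (\<sigma> p) = b (\<sigma> q') - b (\<sigma> p')"
  shows "\<exists>h. permute_mat n (inv_into {..<n} \<sigma>) ` elem_comp n a u \<subseteq> (elem_comp n b h :: 'f::field mat set)"
proof -
  define \<pi> where "\<pi> = inv_into {..<n} \<sigma>"
  have \<pi>_lt: "\<pi> i < n" and \<sigma>\<pi>: "\<sigma> (\<pi> i) = i" if "i < n" for i
    using that bij_betwE[OF bij_betw_inv_into[OF \<sigma>]] bij_betw_inv_into_right[OF \<sigma>]
    unfolding \<pi>_def by auto
  obtain h where h: "\<And>p q. p < n \<Longrightarrow> q < n \<Longrightarrow> a q - a p = u \<Longrightarrow> b (\<sigma> q) - b (\<sigma> p) = h"
    using compat by metis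
  have "permute_mat n \<pi> B \<in> elem_comp n b h" if "B \<in> elem_comp n a u" for B :: "'f mat"
  proof -
    have "b j - b i = h" if ij: "i < n" "j < n" "B $$ (\<pi> i, \<pi> j) \<noteq> 0" for i j
      using \<open>B \<in> elem_comp n a u\<close> ij h[of "\<pi> i" "\<pi> j"] \<pi>_lt \<sigma>\<pi> unfolding elem_comp_def by auto
    then show ?thesis unfolding elem_comp_def by auto
  qed
  then show ?thesis unfolding \<pi>_def by blast
qed

theorem mainTheorem10:
  fixes g :: "nat \<Rightarrow> 'g::ab_group_add" and n :: nat
  assumes no_order2: "\<forall>x::'g. x + x = 0 \<longrightarrow> x = 0"
    and char0: "CHAR('f::field) = 0"
    and distinct: "inj_on g {..<n}"
    and dim1: "\<exists>h. dim_one n (elem_comp n g h :: 'f mat set)"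
    and no_id: "\<forall>a b. nontrivial_monomial2 n g TYPE('f) a b \<longrightarrow>
                       \<not> monomial_identity2 n g TYPE('f) a b"
  shows "\<exists>\<phi> :: 'f mat \<Rightarrow> 'f mat. mat_alg_aut n \<phi> \<and>
           (\<forall>u. \<exists>h. \<phi> ` Gamma n u \<subseteq> elem_comp n g h)"
proof -
  obtain h where "dim_one n (elem_comp n g h :: 'f mat set)" using dim1 by blast
  then obtain p0 q0 where pq0: "p0 < n" "q0 < n" "g q0 - g p0 = h"
    and unique: "\<And>p q. p < n \<Longrightarrow> q < n \<Longrightarrow> g q - g p = h \<Longrightarrow> p = p0 \<and> q = q0"
    by (rule dim_one_elem_comp_unique_pair) blast
  define c where "c = g p0 + g q0"
  have "c - g x \<in> g ` {..<n}" if "x < n" for x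
    unfolding c_def
    using tuple_closed_under_reflection[OF no_id pq0(1,2) _ that] unique pq0(3) by blast
  then obtain \<sigma> where \<sigma>: "bij_betw \<sigma> {..<n} {..<n}"
    and sym: "\<And>t. t < n \<Longrightarrow> g (\<sigma> (n - 1 - t)) = c - g (\<sigma> t)"
    using symmetric_reordering[OF no_order2 distinct] by blast
  interpret symmetric_tuple n "g \<circ> \<sigma>" c
    using sym by unfold_locales simp
  have compat: "g (\<sigma> q) - g (\<sigma> p) = g (\<sigma> q') - g (\<sigma> p')"
    if "p < n" "q < n" "p' < n" "q' < n"
      "gamma_g n q - gamma_g n p = gamma_g n q' - gamma_g n p'" for p q p' q'
    using diff_eq_if_gamma_g_diff_eq[OF that] by simp
  show ?thesis
    using mat_alg_aut_permute_mat[OF bij_betw_inv_into[OF \<sigma>]]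
      permute_mat_elem_comp_coarsening[where a = "gamma_g n" and b = g, OF \<sigma> compat]
    unfolding Gamma_def by blast
qed

end
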